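(* For a positive integer $m$ let $M=\lfloor\frac{m-1}{2}\rfloor$ and define $$\widetilde{f_{m,1}}(z)=(-1)^M\int_0^z\frac{y^{2M+2}}{1+y^2}\,dy\qquad\big(z\in\mathbb{C}\setminus([i,i\infty)\cup[-i,-i\infty))\big),$$ the integral taken along the line segment from $0$ to $z$. As $m\to\infty$ the following estimates hold, uniformly in $z$ and $t$: (i) $\widetilde{f_{m,1}}(z)=O(2^{-m})$ for $|z|\le\frac12$; (ii) $\widetilde{f_{m,1}}(it)=O\big(e^{-\frac12\sqrt m}\frac{1}{\sqrt m}\big)$ for $-1+\frac1{\sqrt m}\le t\le1-\frac1{\sqrt m}$; (iii) for $1-\frac1{\sqrt m}\le t\le 1-\frac1m$, $$\widetilde{f_{m,1}}(it)=\frac{1}{2i}\int_{m(1-t)}^\infty\frac{e^{-\zeta}}{\zeta}\,d\zeta+O\!\left(\frac{\ln m}{m}\right)=O(1),$$ and also $\widetilde{f_{m,1}}(-it)=O(1)$. *)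

theory Defs
  imports "HOL-Complex_Analysis.Complex_Analysis"
begin

definition f_tilde :: "nat \<Rightarrow> complex \<Rightarrow> complex" where
  "f_tilde m z = (-1) ^ ((m - 1) div 2) *
     contour_integral (linepath 0 z) (\<lambda>y. y ^ (2 * ((m - 1) div 2) + 2) / (1 + y\<^sup>2))"

definition E1 :: "real \<Rightarrow> real" where
  "E1 x = integral {x..} (\<lambda>s. exp (- s) / s)"

end

(* With n = 2 M + 2 >= m, the integrand y^n / (1 + y^2) is bounded by r^n / (1 - r^2) on the
   disc |y| <= r < 1; this gives (i) for r = 1/2, and (ii) for r = 1 - 1/sqrt m because
   (1 - 1/sqrt m)^m <= exp (- sqrt m).

   On the imaginary axis f_tilde m (i t) = -i times the integral of x^n / (1 - x^2) over [0, t].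
   The substitution x = 1 - u/m turns this into an integral over [m (1 - t), m] of a kernel that
   equals exp (- u) / (2 u) up to O(1 / (m u)), since (1 - u/m)^m = exp (- u) (1 + O(u^2 / m)) and
   n exceeds m by at most 1. Integrating the error against du/u costs O(ln m / m), and the missing
   tail E1 m is exponentially small; this is (iii). Finally (iv) follows from (iii) because
   f_tilde is odd. *)

theory Submission
  imports Defs
begin

lemma mult_exp_minus_le_one: "x * exp (- x) \<le> (1::real)"
proof -
  have "x \<le> exp x" using exp_ge_add_one_self[of x] by linarith
  then show ?thesis by (simp add: exp_minus field_simps)
qed

lemma power2_mult_exp_minus_le:
  fixes x :: real
  assumes "0 \<le> x"
  shows "x\<^sup>2 * exp (- x) \<le> 4"
proof -
  have "(x / 2)\<^sup>2 \<le> (exp (x / 2))\<^sup>2"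
    using exp_ge_add_one_self[of "x / 2"] assms by (intro power_mono) linarith+
  also have "\<dots> = exp x" by (simp add: power2_eq_square flip: exp_add)
  finally show ?thesis by (simp add: exp_minus field_simps power_divide)
qed

lemma exp_minus_sub_one_minus_power_le:
  fixes x :: real
  assumes "0 \<le> x" "x \<le> real n" "n > 0"
  shows "exp (- x) - (1 - x / n) ^ n \<le> x\<^sup>2 * exp (- x) / n"
proof -
  have "1 - x\<^sup>2 / n = 1 + real n * (- (x / n)\<^sup>2)"
    using assms by (simp add: power2_eq_square field_simps)
  also have "\<dots> \<le> (1 + - (x / n)\<^sup>2) ^ n"
    using assms by (intro Bernoulli_inequality) (simp add: power_le_one_iff)
  also have "\<dots> = (1 - x / n) ^ n * (1 + x / n) ^ n"
    by (simp add: power2_eq_square algebra_simps flip: power_mult_distrib)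
  also have "\<dots> \<le> (1 - x / n) ^ n * exp x"
    using assms by (intro mult_left_mono exp_ge_one_plus_x_over_n_power_n) auto
  finally have "1 - x\<^sup>2 / n \<le> (1 - x / n) ^ n * exp x" .
  then have "(1 - x\<^sup>2 / n) * exp (- x) \<le> (1 - x / n) ^ n"
    by (simp add: mult_right_mono[of _ _ "exp (- x)"] exp_minus field_simps)
  then show ?thesis by (simp add: algebra_simps)
qed

lemma one_minus_power_exp_bounds:
  assumes "1 \<le> m" "m \<le> n" "n \<le> m + 1" "0 \<le> u" "u \<le> real m"
  shows "(1 - u / m) ^ n \<le> exp (- u)" "exp (- u) - (1 - u / m) ^ n \<le> 5 / m"
proof -
  define s where "s = 1 - u / m"
  have s: "0 \<le> s" "s \<le> 1" unfolding s_def using assms by auto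
  have "s ^ m \<le> exp (- u)"
    unfolding s_def using assms by (intro exp_ge_one_minus_x_over_n_power_n) auto
  moreover have "s ^ n \<le> s ^ m" "s ^ (m + 1) \<le> s ^ n"
    using power_decreasing[of m n s] power_decreasing[of n "m + 1" s] s assms by auto
  ultimately show "s ^ n \<le> exp (- u)" unfolding s_def by linarith
  have "exp (- u) - s ^ m \<le> u\<^sup>2 * exp (- u) / m"
    unfolding s_def using assms by (intro exp_minus_sub_one_minus_power_le) auto
  also have "\<dots> \<le> 4 / m"
    using power2_mult_exp_minus_le[of u] assms by (intro divide_right_mono) auto
  finally have "exp (- u) - s ^ m \<le> 4 / m" .
  moreover have "s ^ m - s ^ (m + 1) \<le> 1 / m"
  proof -
    have "s ^ m - s ^ (m + 1) = u * s ^ m / m" unfolding s_def by (simp add: algebra_simps)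
    also have "\<dots> \<le> u * exp (- u) / m"
      using \<open>s ^ m \<le> exp (- u)\<close> assms by (intro divide_right_mono mult_left_mono) auto
    also have "\<dots> \<le> 1 / m"
      using mult_exp_minus_le_one[of u] by (intro divide_right_mono) auto
    finally show ?thesis .
  qed
  ultimately show "exp (- u) - s ^ n \<le> 5 / m"
    using \<open>s ^ (m + 1) \<le> s ^ n\<close> by (simp add: add_divide_distrib[symmetric])
qed

lemma has_integral_inverse_ln:
  fixes a b :: real
  assumes "0 < a" "a \<le> b"
  shows "((\<lambda>u. 1 / u) has_integral (ln b - ln a)) {a..b}"
proof (rule fundamental_theorem_of_calculus)
  show "(ln has_vector_derivative 1 / u) (at u within {a..b})" if "u \<in> {a..b}" for u
    using that assms
    by (auto intro!: derivative_eq_intros simp flip: has_real_derivative_iff_has_vector_derivative)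
qed (use assms in auto)

lemma integral_reflect_rescale:
  fixes g :: "real \<Rightarrow> real"
  assumes "continuous_on {0..t} g" "0 \<le> t" "c > 0"
  shows "integral {0..t} g = integral {c * (1 - t)..c} (\<lambda>u. g (1 - u / c) / c)"
proof -
  have "((\<lambda>u. (- 1 / c) *\<^sub>R g (1 - u / c)) has_integral
      (integral {1 - c * (1 - t) / c..1 - c / c} g - integral {1 - c / c..1 - c * (1 - t) / c} g))
      {c * (1 - t)..c}"
  proof (rule has_integral_substitution_general[of "{}", where g' = "\<lambda>_. - 1 / c"])
    show "(\<lambda>u. 1 - u / c) ` {c * (1 - t)..c} \<subseteq> {0..t}"
      using assms by (auto simp: field_simps)
    show "((\<lambda>u. 1 - u / c) has_field_derivative - 1 / c) (at u within {c * (1 - t)..c})" for u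
      using assms by (auto intro!: derivative_eq_intros)
  qed (use assms in \<open>auto intro!: continuous_intros\<close>)
  moreover have "1 - c * (1 - t) / c = t" "1 - c / c = 0"
    using assms by (auto simp: field_simps)
  moreover have "integral {t..0} g = 0"
    using assms by (cases "t = 0") auto
  ultimately have "((\<lambda>u. (- 1 / c) *\<^sub>R g (1 - u / c)) has_integral - integral {0..t} g)
      {c * (1 - t)..c}"
    by simp
  then have "((\<lambda>u. - ((- 1 / c) *\<^sub>R g (1 - u / c))) has_integral integral {0..t} g)
      {c * (1 - t)..c}"
    using has_integral_neg by (metis minus_minus)
  then show ?thesis
    by (intro integral_unique[symmetric]) simp
qed

lemma E1_integrable:
  assumes "c > 0"
  shows "(\<lambda>s::real. exp (- s) / s) integrable_on {c..}"
proof (rule measurable_bounded_by_integrable_imp_integrable_real)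
  show "(\<lambda>s::real. exp (- s) / s) \<in> borel_measurable (lebesgue_on {c..})"
    using assms by (intro continuous_imp_measurable_on_sets_lebesgue continuous_intros) auto
  show "(\<lambda>s. exp (-1 * s) / c) integrable_on {c..}"
    using integrable_on_exp_minus_to_infinity[of 1 c] by (intro integrable_on_divide) auto
  show "\<bar>exp (- s) / s\<bar> \<le> exp (-1 * s) / c" if "s \<in> {c..}" for s
    using that assms by (auto simp: frac_le)
qed auto

lemma E1_nonneg: "c > 0 \<Longrightarrow> 0 \<le> E1 c"
  unfolding E1_def by (intro integral_nonneg E1_integrable) auto

lemma E1_le:
  assumes "c > 0"
  shows "E1 c \<le> exp (- c) / c"
proof -
  have "E1 c \<le> integral {c..} (\<lambda>s. exp (-1 * s) / c)" unfolding E1_def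
    using assms by (intro integral_le E1_integrable integrable_on_divide integrable_on_exp_minus_to_infinity)
      (auto simp: frac_le)
  also have "\<dots> = exp (- c) / c"
    using has_integral_divide[OF has_integral_exp_minus_to_infinity[of 1 c], of c]
    by (intro integral_unique) simp
  finally show ?thesis .
qed

lemma E1_split:
  assumes "0 < a" "a \<le> b"
  shows "E1 a = integral {a..b} (\<lambda>s. exp (- s) / s) + E1 b"
proof -
  have "(\<lambda>s::real. exp (- s) / s) integrable_on {a..b}"
    using assms by (intro integrable_on_subinterval[OF E1_integrable]) auto
  moreover have "(\<lambda>s::real. exp (- s) / s) integrable_on {b..}"
    using assms by (intro E1_integrable) auto
  moreover have "{a..} = {a..b} \<union> {b..}" "{a..b} \<inter> {b..} = {b}" using assms by auto
  ultimately show ?thesis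
    unfolding E1_def by (simp add: integral_Un)
qed

definition arctan_tail :: "nat \<Rightarrow> complex \<Rightarrow> complex" where
  "arctan_tail n z = contour_integral (linepath 0 z) (\<lambda>y. y ^ n / (1 + y\<^sup>2))"

lemma arctan_tail_even_uminus: "arctan_tail (2 * k) (- z) = - arctan_tail (2 * k) z"
  unfolding arctan_tail_def contour_integral_integral
  by (simp add: linepath_def power_mult_distrib)

lemma norm_one_plus_square_ge: "1 - (cmod y)\<^sup>2 \<le> cmod (1 + y\<^sup>2)"
  using norm_triangle_ineq2[of 1 "- (y\<^sup>2)"] by (simp add: norm_power)

lemma norm_arctan_tail_le:
  assumes "cmod z \<le> r" "0 \<le> r" "r < 1"
  shows "cmod (arctan_tail n z) \<le> r ^ Suc n / (1 - r\<^sup>2)"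
proof -
  have r2: "r\<^sup>2 < 1" using assms by (simp add: power_less_one_iff)
  have on_segment: "cmod y \<le> r" if "y \<in> closed_segment 0 z" for y
    using segment_bound[OF that] assms by simp
  have den: "1 - r\<^sup>2 \<le> cmod (1 + y\<^sup>2)" if "cmod y \<le> r" for y
    using norm_one_plus_square_ge[of y] power_mono[OF that, of 2] by simp
  have "(\<lambda>y. y ^ n / (1 + y\<^sup>2)) contour_integrable_on linepath 0 z"
    using den on_segment r2
    by (intro contour_integrable_continuous_linepath continuous_intros) force
  moreover have "cmod (y ^ n / (1 + y\<^sup>2)) \<le> r ^ n / (1 - r\<^sup>2)" if "y \<in> closed_segment 0 z" for y
    using on_segment[OF that] den[OF on_segment[OF that]] r2 assms(2)
    by (auto simp: norm_divide norm_power intro!: frac_le power_mono)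
  ultimately have "cmod (arctan_tail n z) \<le> r ^ n / (1 - r\<^sup>2) * cmod (z - 0)"
    unfolding arctan_tail_def using r2 assms
    by (intro contour_integral_bound_linepath) auto
  also have "\<dots> \<le> r ^ n / (1 - r\<^sup>2) * r"
    using r2 assms by (intro mult_left_mono) auto
  finally show ?thesis by (simp add: mult.commute)
qed

lemma imaginary_power_div_one_plus_square:
  "Complex 0 x ^ (2 * k) / (1 + (Complex 0 x)\<^sup>2) = (-1) ^ k * of_real (x ^ (2 * k) / (1 - x\<^sup>2))"
proof -
  have "Complex 0 x ^ 2 = (-1) * of_real (x\<^sup>2)"
    by (simp add: complex_eq_iff power2_eq_square)
  then have "Complex 0 x ^ (2 * k) = (-1) ^ k * of_real (x ^ (2 * k))"
    by (simp only: power_mult power_mult_distrib of_real_power)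
  moreover have "1 + (Complex 0 x)\<^sup>2 = of_real (1 - x\<^sup>2)"
    by (simp add: complex_eq_iff power2_eq_square)
  ultimately show ?thesis by (simp add: of_real_divide)
qed

lemma arctan_tail_imaginary:
  assumes "0 < t" "t < 1"
  shows "arctan_tail (2 * k) (\<i> * of_real t) =
    \<i> * (-1) ^ k * of_real (integral {0..t} (\<lambda>x. x ^ (2 * k) / (1 - x\<^sup>2)))"
proof -
  define g where "g = (\<lambda>x::real. x ^ (2 * k) / (1 - x\<^sup>2))"
  have "continuous_on {0..t} g"
    unfolding g_def using assms by (intro continuous_intros) (auto simp: power2_eq_1_iff)
  then have "((\<lambda>x. (-1) ^ k * complex_of_real (g x)) has_integral
      (-1) ^ k * of_real (integral {0..t} g)) {0..t}"
    by (intro has_integral_mult_right has_integral_of_real integrable_integral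
        integrable_continuous_interval)
  then have "((\<lambda>x. Complex 0 x ^ (2 * k) / (1 + (Complex 0 x)\<^sup>2)) has_integral
      - \<i> * (\<i> * (-1) ^ k * of_real (integral {0..t} g))) {0..t}"
    unfolding imaginary_power_div_one_plus_square g_def by (simp add: mult.assoc)
  then have "((\<lambda>y. y ^ (2 * k) / (1 + y\<^sup>2)) has_contour_integral
      \<i> * (-1) ^ k * of_real (integral {0..t} g)) (linepath 0 (\<i> * of_real t))"
    using assms by (subst has_contour_integral_linepath_same_Re_iff[where c=0 and a=0 and b=t]) auto
  then show ?thesis
    unfolding arctan_tail_def g_def by (rule contour_integral_unique)
qed

text \<open>The integrand \<open>x ^ n / (1 - x\<^sup>2)\<close> after the substitution \<open>x = 1 - u / m\<close>.\<close>
definition rescaled_kernel :: "nat \<Rightarrow> nat \<Rightarrow> real \<Rightarrow> real" where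
  "rescaled_kernel n m u = (1 - u / m) ^ n / (1 - (1 - u / m)\<^sup>2) / m"

lemma rescaled_kernel_approx:
  assumes "1 \<le> m" "m \<le> n" "n \<le> m + 1" "0 < u" "u \<le> real m"
  shows "\<bar>rescaled_kernel n m u - exp (- u) / (2 * u)\<bar> \<le> 3 / (m * u)"
proof -
  define w where "w = u / m"
  define s where "s = 1 - w"
  define A where "A = s ^ n * w / (2 * (2 - w))"
  define B where "B = (exp (- u) - s ^ n) / 2"
  have w: "0 < w" "w \<le> 1" unfolding w_def using assms by auto
  have bounds: "s ^ n \<le> exp (- u)" "exp (- u) - s ^ n \<le> 5 / m"
    unfolding s_def w_def using one_minus_power_exp_bounds assms by auto
  have decomposition: "s ^ n / (1 - s\<^sup>2) / m - exp (- u) / (2 * u) = (A - B) / u"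
    using w assms unfolding A_def B_def s_def w_def by (simp add: power2_eq_square field_simps)
  have "A \<le> 1 / (2 * real m)"
  proof -
    have "A \<le> exp (- u) * w / 2"
      using w bounds unfolding A_def s_def by (intro frac_le mult_right_mono) auto
    also have "\<dots> \<le> 1 / (2 * real m)"
      using mult_exp_minus_le_one[of u] assms unfolding w_def by (simp add: field_simps)
    finally show ?thesis .
  qed
  moreover have "0 \<le> A" unfolding A_def s_def using w by simp
  moreover have "0 \<le> B" "B \<le> 5 / (2 * real m)" unfolding B_def using bounds by auto
  moreover have "1 / (2 * real m) \<le> 5 / (2 * real m)" by (intro divide_right_mono) auto
  ultimately have "\<bar>A - B\<bar> \<le> 5 / (2 * real m)"
    by (intro abs_leI) linarith+
  then have "\<bar>s ^ n / (1 - s\<^sup>2) / m - exp (- u) / (2 * u)\<bar> \<le> (5 / (2 * real m)) / u"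
    unfolding decomposition abs_divide abs_of_pos[OF \<open>0 < u\<close>]
    using assms by (intro divide_right_mono) auto
  also have "\<dots> \<le> 3 / (m * u)"
    using assms by (simp add: field_simps)
  finally show ?thesis unfolding rescaled_kernel_def s_def w_def .
qed

lemma integral_rescaled_kernel_approx:
  assumes "1 \<le> m" "m \<le> n" "n \<le> m + 1" "0 < a" "a \<le> real m"
  shows "\<bar>integral {a..m} (rescaled_kernel n m) - integral {a..m} (\<lambda>s. exp (- s) / s) / 2\<bar>
           \<le> 3 * (ln m - ln a) / m"
proof -
  define k where "k = rescaled_kernel n m"
  have "continuous_on {a..m} k"
    unfolding k_def rescaled_kernel_def using assms
    by (intro continuous_intros) (auto simp: power2_eq_1_iff field_simps)
  then have "(k has_integral integral {a..m} k) {a..m}"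
    by (intro integrable_integral integrable_continuous_interval)
  moreover have "((\<lambda>s. exp (- s) / s) has_integral integral {a..m} (\<lambda>s. exp (- s) / s)) {a..m}"
    using assms by (intro integrable_integral integrable_continuous_interval continuous_intros) auto
  ultimately have difference: "((\<lambda>u. k u - exp (- u) / u / 2) has_integral
      integral {a..m} k - integral {a..m} (\<lambda>s. exp (- s) / s) / 2) {a..m}"
    by (intro has_integral_diff has_integral_divide)
  have majorant: "((\<lambda>u. 3 / m * (1 / u)) has_integral 3 / m * (ln m - ln a)) {a..m}"
    using assms by (intro has_integral_mult_right has_integral_inverse_ln) auto
  have "norm (integral {a..m} (\<lambda>u. k u - exp (- u) / u / 2)) \<le> integral {a..m} (\<lambda>u. 3 / m * (1 / u))"
  proof (rule integral_norm_bound_integral)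
    show "norm (k u - exp (- u) / u / 2) \<le> 3 / m * (1 / u)" if "u \<in> {a..m}" for u
      using rescaled_kernel_approx[of m n u] that assms unfolding k_def by (simp add: mult.commute)
  qed (use difference majorant in blast)+
  then show ?thesis
    using integral_unique[OF difference] integral_unique[OF majorant] unfolding k_def by simp
qed

definition tilde_degree :: "nat \<Rightarrow> nat" where
  "tilde_degree m = 2 * ((m - 1) div 2) + 2"

lemma tilde_degree_ge: "m \<le> tilde_degree m"
  unfolding tilde_degree_def by auto

lemma tilde_degree_le: "m \<ge> 1 \<Longrightarrow> tilde_degree m \<le> m + 1"
  unfolding tilde_degree_def by presburger

lemma f_tilde_eq_arctan_tail:
  "f_tilde m z = (-1) ^ ((m - 1) div 2) * arctan_tail (tilde_degree m) z"
  unfolding f_tilde_def arctan_tail_def tilde_degree_def ..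

lemma f_tilde_uminus: "f_tilde m (- z) = - f_tilde m z"
  unfolding f_tilde_eq_arctan_tail tilde_degree_def
  by (simp add: arctan_tail_even_uminus[of "(m - 1) div 2 + 1", simplified])

lemma f_tilde_imaginary:
  assumes "0 < t" "t < 1"
  shows "f_tilde m (\<i> * of_real t) =
    - \<i> * of_real (integral {0..t} (\<lambda>x. x ^ tilde_degree m / (1 - x\<^sup>2)))"
proof -
  define k where "k = (m - 1) div 2"
  have "tilde_degree m = 2 * (k + 1)" unfolding tilde_degree_def k_def by simp
  then show ?thesis
    unfolding f_tilde_eq_arctan_tail k_def[symmetric]
    using arctan_tail_imaginary[OF assms, of "k + 1"] by simp
qed

lemma norm_f_tilde_le_half_disc:
  assumes "cmod z \<le> 1 / 2"
  shows "cmod (f_tilde m z) \<le> 2 powr (- real m)"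
proof -
  have "cmod (f_tilde m z) \<le> (1 / 2) ^ Suc (tilde_degree m) / (1 - (1 / 2)\<^sup>2)"
    unfolding f_tilde_eq_arctan_tail using norm_arctan_tail_le[of z "1 / 2"] assms
    by (simp add: norm_mult norm_power)
  also have "\<dots> = 2 / 3 * (1 / 2 :: real) ^ tilde_degree m" by (simp add: power2_eq_square)
  also have "\<dots> \<le> (1 / 2) ^ m"
    using power_decreasing[OF tilde_degree_ge, of "1 / 2 :: real" m]
      zero_le_power[of "1 / 2 :: real" m] by linarith
  also have "\<dots> = 2 powr (- real m)"
    by (simp add: powr_minus powr_realpow power_one_over inverse_eq_divide)
  finally show ?thesis .
qed

lemma norm_f_tilde_imaginary_interior_le:
  assumes "1 \<le> m" "\<bar>t\<bar> \<le> 1 - 1 / sqrt m"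
  shows "cmod (f_tilde m (\<i> * of_real t)) \<le> 16 * (exp (- sqrt m / 2) / sqrt m)"
proof -
  define q where "q = sqrt m"
  define r where "r = 1 - 1 / q"
  have q: "1 \<le> q" "q\<^sup>2 = m" unfolding q_def using assms by auto
  have "q \<le> m" using q mult_left_mono[of 1 q q] by (simp add: power2_eq_square)
  have r: "0 \<le> r" "r < 1" unfolding r_def using q by (auto simp: field_simps)
  have "cmod (f_tilde m (\<i> * of_real t)) \<le> r ^ Suc (tilde_degree m) / (1 - r\<^sup>2)"
    unfolding f_tilde_eq_arctan_tail using norm_arctan_tail_le[of _ r] assms r
    by (simp add: norm_mult norm_power r_def q_def)
  also have "\<dots> \<le> r ^ m / (1 - r)"
  proof (rule frac_le)
    show "r ^ Suc (tilde_degree m) \<le> r ^ m"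
      using r tilde_degree_ge[of m] by (intro power_decreasing) auto
    show "1 - r \<le> 1 - r\<^sup>2" using r by (simp add: power2_eq_square mult_left_le)
  qed (use r in auto)
  also have "\<dots> = q * (1 - q / m) ^ m"
  proof -
    have "1 - r = 1 / q" "r = 1 - q / m"
      unfolding r_def using q assms(1) by (auto simp: power2_eq_square field_simps)
    then show ?thesis by simp
  qed
  also have "\<dots> \<le> q * exp (- q)"
    using q \<open>q \<le> m\<close> exp_ge_one_minus_x_over_n_power_n[of q m] assms
    by (intro mult_left_mono) auto
  also have "\<dots> \<le> 16 * (exp (- q / 2) / q)"
  proof -
    have "(q / 2)\<^sup>2 * exp (- (q / 2)) \<le> 4" using q by (intro power2_mult_exp_minus_le) auto
    then have "q * q * exp (- q / 2) \<le> 16" by (simp add: power2_eq_square field_simps)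
    then have "q * q * (exp (- q / 2) * exp (- q / 2)) \<le> 16 * exp (- q / 2)" by simp
    then show ?thesis using q by (simp add: field_simps flip: exp_add)
  qed
  finally show ?thesis unfolding q_def .
qed

lemma f_tilde_imaginary_approx_E1:
  assumes "3 \<le> m" "0 < t" "t \<le> 1 - 1 / m"
  shows "cmod (f_tilde m (\<i> * of_real t) - of_real (E1 (m * (1 - t))) / (2 * \<i>))
           \<le> 4 * (ln m / m)"
proof -
  define n where "n = tilde_degree m"
  define a where "a = m * (1 - t)"
  define L where "L = ln m / m"
  define G where "G = integral {0..t} (\<lambda>x. x ^ n / (1 - x\<^sup>2))"
  define I where "I = integral {a..m} (\<lambda>s. exp (- s) / s)"
  have m: "real m \<ge> 3" "0 < 1 / real m" using assms by auto
  then have a: "1 \<le> a" "a \<le> m"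
    using assms unfolding a_def by (auto simp: field_simps)
  have "t < 1" using assms m by linarith
  have "1 \<le> ln m"
    using m exp_le by (subst ln_ge_iff) auto
  then have "1 / m \<le> L" unfolding L_def using m by (intro divide_right_mono) auto
  have n: "m \<le> n" "n \<le> m + 1"
    unfolding n_def using tilde_degree_ge tilde_degree_le[of m] assms by auto
  have "G = integral {a..m} (rescaled_kernel n m)"
    unfolding G_def a_def rescaled_kernel_def using assms \<open>t < 1\<close>
    by (intro integral_reflect_rescale continuous_intros) (auto simp: power2_eq_1_iff)
  then have "\<bar>G - I / 2\<bar> \<le> 3 * (ln m - ln a) / m"
    unfolding I_def using integral_rescaled_kernel_approx[of m n a] assms n a by simp
  also have "\<dots> \<le> 3 * L"
    unfolding L_def using a by (simp add: divide_right_mono)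
  finally have "\<bar>G - I / 2\<bar> \<le> 3 * L" .
  moreover have "E1 a = I + E1 m"
    unfolding I_def using a by (intro E1_split) auto
  moreover have "0 \<le> E1 m" "E1 m \<le> L"
  proof -
    show "0 \<le> E1 m" using m by (intro E1_nonneg) auto
    have "E1 m \<le> exp (- real m) / m" using m by (intro E1_le) auto
    also have "\<dots> \<le> 1 / m" using m by (intro divide_right_mono) auto
    finally show "E1 m \<le> L" using \<open>1 / m \<le> L\<close> by linarith
  qed
  ultimately have "\<bar>G - E1 a / 2\<bar> \<le> 4 * L"
    unfolding abs_le_iff by (intro conjI) linarith+
  moreover have "f_tilde m (\<i> * of_real t) - of_real (E1 a) / (2 * \<i>) = - \<i> * of_real (G - E1 a / 2)"
    unfolding G_def n_def f_tilde_imaginary[OF \<open>0 < t\<close> \<open>t < 1\<close>] by (simp add: field_simps)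
  ultimately show ?thesis
    unfolding a_def[symmetric] L_def[symmetric]
    by (simp only: norm_mult norm_minus_cancel norm_ii norm_of_real mult_1)
qed

lemma norm_f_tilde_imaginary_near_one_le:
  assumes "3 \<le> m" "0 < t" "t \<le> 1 - 1 / m"
  shows "cmod (f_tilde m (\<i> * of_real t)) \<le> 5"
proof -
  define a where "a = m * (1 - t)"
  have "1 \<le> a" using assms unfolding a_def by (simp add: field_simps)
  have "cmod (f_tilde m (\<i> * of_real t))
      \<le> cmod (of_real (E1 a) / (2 * \<i>)) + cmod (f_tilde m (\<i> * of_real t) - of_real (E1 a) / (2 * \<i>))"
    by (rule norm_triangle_sub)
  also have "\<dots> \<le> 1 / 2 + 4 * (ln m / m)"
  proof (rule add_mono)
    show "cmod (f_tilde m (\<i> * of_real t) - of_real (E1 a) / (2 * \<i>)) \<le> 4 * (ln m / m)"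
      unfolding a_def using assms by (rule f_tilde_imaginary_approx_E1)
    have "E1 a \<le> exp (- a) / a" using \<open>1 \<le> a\<close> by (intro E1_le) auto
    also have "\<dots> \<le> 1 / 1" using \<open>1 \<le> a\<close> by (intro frac_le) auto
    finally show "cmod (of_real (E1 a) / (2 * \<i>)) \<le> 1 / 2"
      using E1_nonneg[of a] \<open>1 \<le> a\<close> by (simp add: norm_divide norm_mult)
  qed
  also have "\<dots> \<le> 5"
  proof -
    have "ln m / m \<le> 1" using ln_le_minus_one[of m] assms by simp
    then show ?thesis by simp
  qed
  finally show ?thesis .
qed

theorem lemma2:
  shows
  "(\<exists>C N. \<forall>m\<ge>N. \<forall>z. cmod z \<le> 1/2 \<longrightarrow>
        cmod (f_tilde m z) \<le> C * 2 powr (- real m))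
 \<and> (\<exists>C N. \<forall>m\<ge>N. \<forall>t::real. -1 + 1 / sqrt (real m) \<le> t \<and> t \<le> 1 - 1 / sqrt (real m) \<longrightarrow>
        cmod (f_tilde m (\<i> * of_real t)) \<le> C * (exp (- sqrt (real m) / 2) / sqrt (real m)))
 \<and> (\<exists>C N. \<forall>m\<ge>N. \<forall>t::real. 1 - 1 / sqrt (real m) \<le> t \<and> t \<le> 1 - 1 / real m \<longrightarrow>
        cmod (f_tilde m (\<i> * of_real t) - of_real (E1 (real m * (1 - t))) / (2 * \<i>))
          \<le> C * (ln (real m) / real m))
 \<and> (\<exists>C N. \<forall>m\<ge>N. \<forall>t::real. 1 - 1 / sqrt (real m) \<le> t \<and> t \<le> 1 - 1 / real m \<longrightarrow>
        cmod (f_tilde m (\<i> * of_real t)) \<le> C \<and> cmod (f_tilde m (- \<i> * of_real t)) \<le> C)"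
proof (intro conjI)
  have t_pos: "0 < t" if "3 \<le> m" "1 - 1 / sqrt (real m) \<le> t" for m :: nat and t :: real
  proof -
    have "1 < sqrt (real m)" using that(1) by simp
    then show ?thesis using that(2) by (smt (verit) divide_less_eq_1_pos)
  qed
  show "\<exists>C N. \<forall>m\<ge>N. \<forall>z. cmod z \<le> 1/2 \<longrightarrow> cmod (f_tilde m z) \<le> C * 2 powr (- real m)"
    by (intro exI[of _ "1::real"] exI[of _ "0::nat"] allI impI) (simp add: norm_f_tilde_le_half_disc)
  show "\<exists>C N. \<forall>m\<ge>N. \<forall>t::real. -1 + 1 / sqrt (real m) \<le> t \<and> t \<le> 1 - 1 / sqrt (real m) \<longrightarrow>
        cmod (f_tilde m (\<i> * of_real t)) \<le> C * (exp (- sqrt (real m) / 2) / sqrt (real m))"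
    by (intro exI[of _ "16::real"] exI[of _ "1::nat"] allI impI norm_f_tilde_imaginary_interior_le)
      (auto simp: abs_le_iff)
  show "\<exists>C N. \<forall>m\<ge>N. \<forall>t::real. 1 - 1 / sqrt (real m) \<le> t \<and> t \<le> 1 - 1 / real m \<longrightarrow>
        cmod (f_tilde m (\<i> * of_real t) - of_real (E1 (real m * (1 - t))) / (2 * \<i>))
          \<le> C * (ln (real m) / real m)"
    by (intro exI[of _ "4::real"] exI[of _ "3::nat"] allI impI)
      (blast intro: f_tilde_imaginary_approx_E1 t_pos)
  show "\<exists>C N. \<forall>m\<ge>N. \<forall>t::real. 1 - 1 / sqrt (real m) \<le> t \<and> t \<le> 1 - 1 / real m \<longrightarrow>
        cmod (f_tilde m (\<i> * of_real t)) \<le> C \<and> cmod (f_tilde m (- \<i> * of_real t)) \<le> C"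
    using f_tilde_uminus[of _ "\<i> * of_real _"]
    by (intro exI[of _ "5::real"] exI[of _ "3::nat"] allI impI)
      (auto intro: norm_f_tilde_imaginary_near_one_le t_pos)
qed

end
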